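(* For $n\in\mathbb{N}$, $q>0$ and $M_n\in\{0,1,\dots,n-1\}$, $$\mathcal{P}_n^q(\mathcal{S}(n,M_n))=\begin{cases} q\,\dfrac{M_n}{n}\Big(\dfrac{n!}{M_n!}\,\dfrac{1}{\prod_{l=M_n}^{n-1}(l+q)}\Big)\displaystyle\sum_{j=M_n}^{n-1}\frac1j, & M_n\in\{1,\dots,n-1\};\\[2ex] \dfrac{(n-1)!}{\prod_{l=1}^{n-1}(l+q)}, & M_n=0.\end{cases}$$
   Context: For $n\in\mathbb{N}$ and $q>0$, $P_n^{\mathrm{LR}^-;q}$ is the probability measure on $S_n$ given by $P_n^{\mathrm{LR}^-;q}(\sigma)=q^{\mathrm{LR}^-_n(\sigma)}/(q(q+1)\cdots(q+n-1))$, where $\mathrm{LR}^-_n(\sigma)=|\{j\in[n]:\sigma_j=\min\{\sigma_i:1\le i\le j\}\}|$ is the number of left-to-right minima of $\sigma$. Secretary problem setting: $n$ items with ranks $1,\dots,n$ (rank $1$ is the highest) arrive one at a time; $\sigma=\sigma_1\cdots\sigma_n\in S_n$ means the $j$th arriving item has rank $\sigma_j$, and $\sigma$ is random with law $P_n^{\mathrm{LR}^-;q}$. The observer only sees relative ranks of items arrived so far and must select or irrevocably reject each item; the last item must be accepted if reached. For $M_n\in\{0,\dots,n-1\}$, the strategy $\mathcal{S}(n,M_n)$ rejects the first $M_n$ items and then selects the first later item ranked higher than all of the first $M_n$ items (if no such item exists, the last item is taken); $\mathcal{S}(n,0)$ selects the first item. $\mathcal{P}_n^{q}(\mathcal{S}(n,M_n))$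 is the probability under $P_n^{\mathrm{LR}^-;q}$ that $\mathcal{S}(n,M_n)$ selects the item of rank $1$. *)

theory Defs
  imports Complex_Main "HOL-Combinatorics.Multiset_Permutations"
begin

text \<open>A permutation sigma of [n] is represented as the list [sigma_1, ..., sigma_n];
  position j (1-based) is list index j-1. Rank 1 is the best item.\<close>

definition LR_minus :: "nat list \<Rightarrow> nat" where
  "LR_minus xs = card {j. j < length xs \<and> xs ! j = Min (set (take (Suc j) xs))}"

definition LR_weight :: "nat \<Rightarrow> real \<Rightarrow> nat list \<Rightarrow> real" where
  "LR_weight n q xs = q ^ LR_minus xs / pochhammer q n"

text \<open>0-based index of the item chosen by strategy S(n,M).\<close>
definition sel_index :: "nat \<Rightarrow> nat \<Rightarrow> nat list \<Rightarrow> nat" where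
  "sel_index n M xs =
     (if M = 0 then 0
      else if (\<exists>j. M \<le> j \<and> j < n \<and> xs ! j < Min (set (take M xs)))
      then (LEAST j. M \<le> j \<and> j < n \<and> xs ! j < Min (set (take M xs)))
      else n - 1)"

definition strategy_success :: "nat \<Rightarrow> nat \<Rightarrow> nat list \<Rightarrow> bool" where
  "strategy_success n M xs \<longleftrightarrow> xs ! sel_index n M xs = 1"

definition success_prob :: "nat \<Rightarrow> real \<Rightarrow> nat \<Rightarrow> real" where
  "success_prob n q M =
     (\<Sum>xs\<in>{xs \<in> permutations_of_set {1..n}. strategy_success n M xs}. LR_weight n q xs)"

end

theory Submission
  imports Defs
begin

(* Appending the last entry a to a permutation of A - {a} creates a new left-to-right minimum
   exactly when a = Min A.  Hence the q-weights of the permutations of an m-set with no, resp.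
   exactly one, left-to-right minimum at the positions >= K satisfy simple recursions in m.
   Since the best item is the last left-to-right minimum and S(n,M) picks the first
   left-to-right minimum after the first M items, S(n,M) succeeds iff exactly one
   left-to-right minimum lies after position M (for M >= 1), and S(n,0) succeeds iff none
   lies after the first item. *)

definition is_LR_min :: "'a::linorder list \<Rightarrow> nat \<Rightarrow> bool" where
  "is_LR_min xs j \<longleftrightarrow> xs ! j = Min (set (take (Suc j) xs))"

(* Positions are 0-based: LR_mins_from K xs counts the left-to-right minima among the items
   K + 1, ..., length xs. *)
definition LR_mins_from :: "nat \<Rightarrow> 'a::linorder list \<Rightarrow> nat" where
  "LR_mins_from K xs = card {j. K \<le> j \<and> j < length xs \<and> is_LR_min xs j}"

lemma LR_minus_eq_LR_mins_from: "LR_minus xs = LR_mins_from 0 xs"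
  unfolding LR_minus_def LR_mins_from_def is_LR_min_def by simp

lemma is_LR_min_iff:
  assumes "distinct xs" "j < length xs"
  shows "is_LR_min xs j \<longleftrightarrow> (\<forall>i<j. xs ! j < xs ! i)"
proof -
  have "set (take (Suc j) xs) = insert (xs ! j) (set (take j xs))"
    using assms(2) by (simp add: take_Suc_conv_app_nth)
  moreover have "xs ! j \<notin> set (take j xs)"
    using assms by (simp add: in_set_conv_nth nth_eq_iff_index_eq)
  moreover have "set (take j xs) = (!) xs ` {..<j}"
    using assms(2) by (simp add: nth_image[symmetric] atLeast0LessThan)
  ultimately show ?thesis
    unfolding is_LR_min_def by (auto simp: eq_Min_iff order.strict_iff_order)
qed

lemma LR_mins_from_snoc:
  "LR_mins_from K (ys @ [a]) =
     LR_mins_from K ys + (if K \<le> length ys \<and> a = Min (insert a (set ys)) then 1 else 0)"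
proof -
  have "{j. K \<le> j \<and> j < length (ys @ [a]) \<and> is_LR_min (ys @ [a]) j} =
        {j. K \<le> j \<and> j < length ys \<and> is_LR_min ys j} \<union>
        (if K \<le> length ys \<and> a = Min (insert a (set ys)) then {length ys} else {})"
    by (auto simp: is_LR_min_def nth_append less_Suc_eq)
  then show ?thesis
    unfolding LR_mins_from_def by (simp add: card_insert_if)
qed

lemma is_LR_min_at_Min:
  assumes "distinct xs" "p < length xs" "xs ! p = Min (set xs)"
  shows "is_LR_min xs p"
proof -
  have "xs ! p < xs ! i" if "i < p" for i
  proof -
    have "xs ! p \<le> xs ! i"
      using assms(2,3) that by simp
    moreover have "xs ! i \<noteq> xs ! p"
      using nth_eq_iff_index_eq[OF assms(1)] assms(2) that by simp
    ultimately show ?thesis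
      by simp
  qed
  then show ?thesis
    using is_LR_min_iff[OF assms(1,2)] by blast
qed

lemma is_LR_min_le_Min_index:
  assumes "distinct xs" "p < length xs" "xs ! p = Min (set xs)"
    and "j < length xs" "is_LR_min xs j"
  shows "j \<le> p"
proof (rule ccontr)
  assume "\<not> j \<le> p"
  then have "xs ! j < xs ! p"
    using is_LR_min_iff[OF assms(1,4)] assms(5) by simp
  then show False
    using assms(3,4) by (simp add: leD)
qed

lemma sel_index_eq_first_LR_min:
  assumes "distinct xs" "length xs = n" "1 \<le> M" "M \<le> n"
  defines "L \<equiv> \<lambda>j. M \<le> j \<and> j < n \<and> is_LR_min xs j"
  shows "sel_index n M xs = (if \<exists>j. L j then LEAST j. L j else n - 1)"
proof -
  define m0 where "m0 = Min (set (take M xs))"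
  define P where "P = (\<lambda>j. M \<le> j \<and> j < n \<and> xs ! j < m0)"
  have take_M: "set (take M xs) = (!) xs ` {..<M}"
    using assms(2,4) by (simp add: nth_image[symmetric] atLeast0LessThan)
  have m0_le: "m0 \<le> xs ! i" if "i < M" for i
    using that by (simp add: m0_def take_M)
  have "m0 \<in> (!) xs ` {..<M}"
    unfolding m0_def take_M using assms(3) by (intro Min_in) (auto simp: lessThan_empty_iff)
  then obtain i0 where i0: "i0 < M" "xs ! i0 = m0"
    by auto
  have L_P: "P j" if "L j" for j
    using that i0 is_LR_min_iff[OF assms(1)] assms(2) unfolding L_def P_def by auto
  have least_P: "L (LEAST j. P j)" if "P j" for j
  proof -
    have P0: "P (LEAST j. P j)"
      using that by (rule LeastI)
    have "xs ! (LEAST j. P j) < xs ! i" if "i < (LEAST j. P j)" for i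
      using that P0 not_less_Least[OF that] m0_le unfolding P_def
      by (cases "i < M") (auto simp: not_less intro: less_le_trans)
    then show ?thesis
      using P0 is_LR_min_iff[OF assms(1)] assms(2) unfolding P_def L_def by auto
  qed
  have "(LEAST j. P j) = (LEAST j. L j)" if "P j" for j
    by (rule Least_equality[symmetric]) (auto intro: least_P[OF that] Least_le L_P)
  then show ?thesis
    unfolding sel_index_def m0_def[symmetric] P_def[symmetric] using assms(3) L_P least_P by auto
qed

lemma best_is_last_LR_min:
  assumes "xs \<in> permutations_of_set {1..n}" "0 < n"
  obtains p where "p < n" "\<And>j. j < n \<Longrightarrow> xs ! j = 1 \<longleftrightarrow> j = p"
    "is_LR_min xs p" "\<And>j. j < n \<Longrightarrow> is_LR_min xs j \<Longrightarrow> j \<le> p"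
proof -
  have set: "set xs = {1..n}" and dist: "distinct xs" and len: "length xs = n"
    using permutations_of_setD[OF assms(1)] length_finite_permutations_of_set[OF assms(1)] by auto
  have "1 \<in> set xs"
    using assms(2) by (simp add: set)
  then obtain p where p: "p < n" "xs ! p = 1"
    by (auto simp: in_set_conv_nth len)
  have min: "xs ! p = Min (set xs)"
    using assms(2) unfolding set p(2) by (intro Min_eqI[symmetric]) auto
  show thesis
  proof (rule that[OF p(1)])
    show "xs ! j = 1 \<longleftrightarrow> j = p" if "j < n" for j
      using nth_eq_iff_index_eq[OF dist, of j p] p that len by auto
    show "is_LR_min xs p"
      using is_LR_min_at_Min[OF dist _ min] p(1) len by simp
    show "j \<le> p" if "j < n" "is_LR_min xs j" for j
      using is_LR_min_le_Min_index[OF dist _ min] p(1) len that by simp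
  qed
qed

lemma strategy_success_iff_one_late_LR_min:
  assumes xs: "xs \<in> permutations_of_set {1..n}" and M: "1 \<le> M" "M < n"
  shows "strategy_success n M xs \<longleftrightarrow> LR_mins_from M xs = 1"
proof -
  obtain p where p: "p < n" "\<And>j. j < n \<Longrightarrow> xs ! j = 1 \<longleftrightarrow> j = p"
    "is_LR_min xs p" "\<And>j. j < n \<Longrightarrow> is_LR_min xs j \<Longrightarrow> j \<le> p"
    using best_is_last_LR_min[OF xs] M by auto
  have dist: "distinct xs" and len: "length xs = n"
    using permutations_of_setD[OF xs] length_finite_permutations_of_set[OF xs] by auto
  define L where "L = (\<lambda>j. M \<le> j \<and> j < n \<and> is_LR_min xs j)"
  have count: "LR_mins_from M xs = card {j. L j}"
    unfolding LR_mins_from_def L_def len ..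
  have sel: "sel_index n M xs = (if \<exists>j. L j then LEAST j. L j else n - 1)"
    unfolding L_def using sel_index_eq_first_LR_min[OF dist len M(1)] M(2) by simp
  show ?thesis
  proof (cases "\<exists>j. L j")
    case True
    define j0 where "j0 = (LEAST j. L j)"
    have "L j0"
      unfolding j0_def using True by (rule LeastI_ex)
    have "j0 \<le> p"
      using \<open>L j0\<close> p(4) unfolding L_def by simp
    then have "L p"
      using \<open>L j0\<close> p(1,3) unfolding L_def by simp
    have L_between: "{j. L j} \<subseteq> {j0..p}"
      using p(4) Least_le[of L] unfolding L_def j0_def by auto
    have "card {j. L j} = 1 \<longleftrightarrow> {j. L j} = {p}"
      using \<open>L p\<close> by (auto simp: card_1_singleton_iff set_eq_iff)
    also have "\<dots> \<longleftrightarrow> j0 = p"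
      using L_between \<open>L j0\<close> \<open>L p\<close> by auto
    moreover have "strategy_success n M xs \<longleftrightarrow> j0 = p"
      unfolding strategy_success_def sel j0_def[symmetric] using True \<open>L j0\<close> p(2) L_def by simp
    ultimately show ?thesis
      using count by simp
  next
    case False
    then have "n - 1 \<noteq> p"
      using p(1,3) M unfolding L_def by auto
    then show ?thesis
      using False count sel p(2) M unfolding strategy_success_def by simp
  qed
qed

lemma strategy_success_0_iff_no_late_LR_min:
  assumes xs: "xs \<in> permutations_of_set {1..n}" and "0 < n"
  shows "strategy_success n 0 xs \<longleftrightarrow> LR_mins_from 1 xs = 0"
proof -
  obtain p where p: "p < n" "\<And>j. j < n \<Longrightarrow> xs ! j = 1 \<longleftrightarrow> j = p"
    "is_LR_min xs p" "\<And>j. j < n \<Longrightarrow> is_LR_min xs j \<Longrightarrow> j \<le> p"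
    using best_is_last_LR_min[OF assms] by auto
  have "LR_mins_from 1 xs = 0 \<longleftrightarrow> p = 0"
    using p(1,3,4) length_finite_permutations_of_set[OF xs]
    unfolding LR_mins_from_def by auto
  moreover have "strategy_success n 0 xs \<longleftrightarrow> p = 0"
    using p(2)[of 0] assms(2) unfolding strategy_success_def sel_index_def by auto
  ultimately show ?thesis
    by simp
qed

lemma permutations_of_set_snoc:
  assumes "A \<noteq> {}"
  shows "permutations_of_set A = (\<Union>a\<in>A. (\<lambda>ys. ys @ [a]) ` permutations_of_set (A - {a}))"
proof -
  have "permutations_of_set A = rev ` (\<Union>a\<in>A. (\<lambda>ys. a # ys) ` permutations_of_set (A - {a}))"
    using permutations_of_set_nonempty[OF assms] rev_permutations_of_set[of A] by simp
  also have "\<dots> = (\<Union>a\<in>A. (\<lambda>ys. ys @ [a]) ` (rev ` permutations_of_set (A - {a})))"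
    by (simp only: image_UN image_image rev.simps)
  finally show ?thesis
    by simp
qed

lemma sum_permutations_of_set_snoc:
  assumes "finite A" "A \<noteq> {}"
  shows "(\<Sum>xs\<in>permutations_of_set A. f xs) =
         (\<Sum>a\<in>A. \<Sum>ys\<in>permutations_of_set (A - {a}). f (ys @ [a]))"
proof -
  have "(\<Sum>xs\<in>permutations_of_set A. f xs) =
        (\<Sum>a\<in>A. \<Sum>xs\<in>(\<lambda>ys. ys @ [a]) ` permutations_of_set (A - {a}). f xs)"
    unfolding permutations_of_set_snoc[OF assms(2)]
    by (rule sum.UNION_disjoint) (auto simp: assms(1))
  also have "\<dots> = (\<Sum>a\<in>A. \<Sum>ys\<in>permutations_of_set (A - {a}). f (ys @ [a]))"
    by (simp add: sum.reindex inj_on_def)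
  finally show ?thesis .
qed

lemma LR_counts_snoc_permutation:
  assumes "finite A" "a \<in> A" "ys \<in> permutations_of_set (A - {a})"
  shows "LR_minus (ys @ [a]) = LR_minus ys + (if a = Min A then 1 else 0)"
    and "LR_mins_from K (ys @ [a]) = LR_mins_from K ys + (if K < card A \<and> a = Min A then 1 else 0)"
proof -
  have "insert a (set ys) = A" "length ys = card A - 1" "card A \<noteq> 0"
    using permutations_of_setD(1)[OF assms(3)] length_finite_permutations_of_set[OF assms(3)] assms(1,2)
    by auto
  then show "LR_minus (ys @ [a]) = LR_minus ys + (if a = Min A then 1 else 0)"
    and "LR_mins_from K (ys @ [a]) = LR_mins_from K ys + (if K < card A \<and> a = Min A then 1 else 0)"
    by (auto simp: LR_minus_eq_LR_mins_from LR_mins_from_snoc)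
qed

definition LR_mass :: "real \<Rightarrow> nat \<Rightarrow> (nat \<Rightarrow> bool) \<Rightarrow> nat set \<Rightarrow> real" where
  "LR_mass q K P A =
     (\<Sum>xs\<in>permutations_of_set A. if P (LR_mins_from K xs) then q ^ LR_minus xs else 0)"

lemma LR_mass_rec:
  assumes "finite A" "A \<noteq> {}"
  shows "LR_mass q K P A =
           q * LR_mass q K (\<lambda>c. P (if K < card A then Suc c else c)) (A - {Min A})
           + (\<Sum>a\<in>A - {Min A}. LR_mass q K P (A - {a}))"
    (is "_ = q * LR_mass q K ?P' _ + _")
proof -
  have last_entry: "(\<Sum>ys\<in>permutations_of_set (A - {a}).
                 if P (LR_mins_from K (ys @ [a])) then q ^ LR_minus (ys @ [a]) else 0) =
              (if a = Min A then q * LR_mass q K ?P' (A - {a}) else LR_mass q K P (A - {a}))"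
    if a: "a \<in> A" for a
    unfolding LR_mass_def using LR_counts_snoc_permutation[OF assms(1) a]
    by (auto simp: sum_distrib_left intro!: sum.cong)
  have "LR_mass q K P A =
        (\<Sum>a\<in>A. if a = Min A then q * LR_mass q K ?P' (A - {a}) else LR_mass q K P (A - {a}))"
    unfolding LR_mass_def[of q K P A] sum_permutations_of_set_snoc[OF assms]
    using last_entry by (rule sum.cong[OF refl])
  also have "\<dots> = q * LR_mass q K ?P' (A - {Min A}) + (\<Sum>a\<in>A - {Min A}. LR_mass q K P (A - {a}))"
    using assms by (auto simp: sum.remove[OF assms(1) Min_in] intro!: sum.cong)
  finally show ?thesis .
qed

lemma LR_mass_card_Suc:
  assumes "finite A" "card A = Suc m"
    and "\<And>B. finite B \<Longrightarrow> card B = m \<Longrightarrow> LR_mass q K P B = u"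
    and "\<And>B. finite B \<Longrightarrow> card B = m \<Longrightarrow>
           LR_mass q K (\<lambda>c. P (if K \<le> m then Suc c else c)) B = u'"
  shows "LR_mass q K P A = q * u' + real m * u"
proof -
  have A: "A \<noteq> {}"
    using assms(2) by auto
  have "card (A - {a}) = m" if "a \<in> A" for a
    using assms(1,2) that by simp
  then have "LR_mass q K P A = q * u' + (\<Sum>a\<in>A - {Min A}. u)"
    using LR_mass_rec[OF assms(1) A] assms(1,2,3,4) A by (simp add: less_Suc_eq_le)
  then show ?thesis
    using assms(1,2) A by simp
qed

lemma LR_mass_no_late_min:
  "finite A \<Longrightarrow>
   LR_mass q K (\<lambda>c. c = 0) A = pochhammer q (min K (card A)) * (\<Prod>i=K..<card A. real i)"
proof (induction "card A" arbitrary: A)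
  case 0
  then show ?case
    by (simp add: LR_mass_def LR_mins_from_def LR_minus_def)
next
  case (Suc m)
  let ?g = "pochhammer q (min K m) * (\<Prod>i=K..<m. real i)"
  have "LR_mass q K (\<lambda>c. c = 0) A = q * (if K \<le> m then 0 else ?g) + real m * ?g"
    using Suc by (intro LR_mass_card_Suc) (auto simp: LR_mass_def)
  then show ?case
    using Suc.hyps(2)[symmetric]
    by (cases "K \<le> m") (auto simp: pochhammer_Suc prod.atLeastLessThan_Suc min_def le_Suc_eq algebra_simps)
qed

lemma LR_mass_one_late_min:
  assumes "1 \<le> K"
  shows "finite A \<Longrightarrow>
    LR_mass q K (\<lambda>c. c = 1) A =
      q * pochhammer q (min K (card A)) * (\<Prod>i=K..<card A. real i) * (\<Sum>j=K..<card A. 1 / real j)"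
proof (induction "card A" arbitrary: A)
  case 0
  then show ?case
    by (simp add: LR_mass_def LR_mins_from_def)
next
  case (Suc m)
  let ?g = "pochhammer q (min K m) * (\<Prod>i=K..<m. real i)"
  let ?h = "q * ?g * (\<Sum>j=K..<m. 1 / real j)"
  have "LR_mass q K (\<lambda>c. c = 1) A = q * (if K \<le> m then ?g else ?h) + real m * ?h"
    using Suc LR_mass_no_late_min by (intro LR_mass_card_Suc) auto
  then show ?case
    using Suc.hyps(2)[symmetric] assms
    by (cases "K \<le> m") (auto simp: prod.atLeastLessThan_Suc sum.atLeastLessThan_Suc min_def field_simps)
qed

lemma success_prob_eq_LR_mass:
  assumes "\<And>xs. xs \<in> permutations_of_set {1..n} \<Longrightarrow>
             strategy_success n M xs \<longleftrightarrow> P (LR_mins_from K xs)"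
  shows "success_prob n q M = LR_mass q K P {1..n} / pochhammer q n"
proof -
  have "success_prob n q M =
        (\<Sum>xs\<in>permutations_of_set {1..n}. if strategy_success n M xs then LR_weight n q xs else 0)"
    unfolding success_prob_def by (rule sum.inter_filter) simp
  also have "\<dots> = LR_mass q K P {1..n} / pochhammer q n"
    unfolding LR_mass_def sum_divide_distrib using assms
    by (intro sum.cong) (auto simp: LR_weight_def)
  finally show ?thesis .
qed

lemma pochhammer_eq_pochhammer_mult_prod:
  "K \<le> n \<Longrightarrow> pochhammer q n = pochhammer q K * (\<Prod>l=K..<n. q + of_nat l)"
  by (simp add: pochhammer_prod prod.atLeastLessThan_concat)

lemma prod_atLeastLessThan_eq_fact_ratio:
  assumes "1 \<le> M" "M \<le> n"
  shows "(\<Prod>i=M..<n. real i) = real M / real n * (fact n / fact M)"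
  using assms(2)
proof (induction n rule: dec_induct)
  case base
  then show ?case
    using assms(1) by simp
next
  case (step k)
  have "(\<Prod>i=M..<Suc k. real i) = real M / real k * (fact k / fact M) * real k"
    using step by (simp add: prod.atLeastLessThan_Suc)
  also have "\<dots> = real M / real (Suc k) * (fact (Suc k) / fact M)"
    using step.hyps assms(1) by (simp add: field_simps del: of_nat_Suc)
  finally show ?case .
qed

theorem theorem1p2:
  fixes n M :: nat and q :: real
  assumes "q > 0" and "M < n"
  shows "success_prob n q M =
    (if M \<ge> 1 then
       q * (real M / real n) * (fact n / fact M / (\<Prod>l=M..n-1. (real l + q)))
         * (\<Sum>j=M..n-1. 1 / real j)
     else fact (n - 1) / (\<Prod>l=1..n-1. (real l + q)))"
proof -
  have n: "0 < n" and ivl: "\<And>a. {a..n - 1} = {a..<n}"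
    using assms(2) by auto
  have poch_pos: "pochhammer q K > 0" for K
    using assms(1) by (rule pochhammer_pos)
  show ?thesis
  proof (cases "1 \<le> M")
    case True
    have "success_prob n q M = LR_mass q M (\<lambda>c. c = 1) {1..n} / pochhammer q n"
      using strategy_success_iff_one_late_LR_min[OF _ True assms(2)] by (rule success_prob_eq_LR_mass)
    also have "\<dots> = q * (real M / real n) * (fact n / fact M / (\<Prod>l=M..<n. real l + q))
                      * (\<Sum>j=M..<n. 1 / real j)"
      using LR_mass_one_late_min[OF True, of "{1..n}" q] assms(2) poch_pos[of M]
        pochhammer_eq_pochhammer_mult_prod[of M n q] prod_atLeastLessThan_eq_fact_ratio[OF True]
      by (simp add: min_absorb1 add.commute)
    finally show ?thesis
      using True unfolding ivl by simp
  next
    case False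
    then have "M = 0"
      by simp
    have "success_prob n q M = LR_mass q 1 (\<lambda>c. c = 0) {1..n} / pochhammer q n"
      using strategy_success_0_iff_no_late_LR_min[OF _ n] unfolding \<open>M = 0\<close> by (rule success_prob_eq_LR_mass)
    also have "\<dots> = fact (n - 1) / (\<Prod>l=1..<n. real l + q)"
      using LR_mass_no_late_min[of "{1..n}" q 1] n poch_pos[of 1]
        pochhammer_eq_pochhammer_mult_prod[of 1 n q] prod_atLeastLessThan_eq_fact_ratio[of 1 n]
      by (simp add: fact_reduce add.commute)
    finally show ?thesis
      using False unfolding ivl by simp
  qed
qed

end
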